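(* Let $G$ be the line graph of a bipartite graph. Then $p(G)\le 2$.
   Context: The line graph of a graph $H$ has the edges of $H$ as vertices, two being adjacent iff the corresponding edges of $H$ share a vertex. A comparability graph is a graph admitting a transitive orientation. $p(G)$ is the minimum number $m$ such that $E(G)$ is the union of the edge sets of $m$ pairwise edge-disjoint comparability subgraphs of $G$. *)

theory Defs
  imports Main
begin

definition simple_graph :: "'v set \<Rightarrow> 'v set set \<Rightarrow> bool" where
  "simple_graph V E \<longleftrightarrow> (\<forall>e\<in>E. \<exists>u v. u \<in> V \<and> v \<in> V \<and> u \<noteq> v \<and> e = {u, v})"

definition finite_simple_graph :: "'v set \<Rightarrow> 'v set set \<Rightarrow> bool" where
  "finite_simple_graph V E \<longleftrightarrow> finite V \<and> simple_graph V E"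

definition bipartite :: "'v set \<Rightarrow> 'v set set \<Rightarrow> bool" where
  "bipartite V E \<longleftrightarrow> (\<exists>A B. A \<inter> B = {} \<and> A \<union> B = V \<and>
      (\<forall>e\<in>E. \<exists>a b. a \<in> A \<and> b \<in> B \<and> e = {a, b}))"

definition line_graph_edges :: "'v set set \<Rightarrow> 'v set set set" where
  "line_graph_edges E = {{e, f} | e f. e \<in> E \<and> f \<in> E \<and> e \<noteq> f \<and> e \<inter> f \<noteq> {}}"

definition transitive_orientation :: "'v set set \<Rightarrow> ('v \<times> 'v) set \<Rightarrow> bool" where
  "transitive_orientation E R \<longleftrightarrow>
     (\<forall>u v. (u, v) \<in> R \<longrightarrow> {u, v} \<in> E) \<and>
     (\<forall>u v. u \<noteq> v \<longrightarrow> {u, v} \<in> E \<longrightarrow> ((u, v) \<in> R \<longleftrightarrow> (v, u) \<notin> R)) \<and>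
     trans R"

definition comparability_graph :: "'v set \<Rightarrow> 'v set set \<Rightarrow> bool" where
  "comparability_graph V E \<longleftrightarrow> simple_graph V E \<and> (\<exists>R. transitive_orientation E R)"

definition subgraph :: "'v set \<Rightarrow> 'v set set \<Rightarrow> 'v set \<Rightarrow> 'v set set \<Rightarrow> bool" where
  "subgraph V' E' V E \<longleftrightarrow> simple_graph V' E' \<and> V' \<subseteq> V \<and> E' \<subseteq> E"

definition comparability_cover :: "'v set \<Rightarrow> 'v set set \<Rightarrow> nat \<Rightarrow> bool" where
  "comparability_cover V E m \<longleftrightarrow>
     (\<exists>Vs Es. (\<forall>i<m. subgraph (Vs i) (Es i) V E \<and> comparability_graph (Vs i) (Es i)) \<and>
        (\<forall>i<m. \<forall>j<m. i \<noteq> j \<longrightarrow> Es i \<inter> Es j = {}) \<and>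
        (\<Union>i<m. Es i) = E)"

definition p_number :: "'v set \<Rightarrow> 'v set set \<Rightarrow> nat" where
  "p_number V E = (LEAST m. comparability_cover V E m)"

end

theory Submission
  imports Defs
begin

(* With parts A and B, an edge of the line graph is a pair of distinct edges meeting in a vertex
   of A or in a vertex of B, and never both, since two edges sharing a vertex of each part
   coincide.  The pairs meeting in A form disjoint cliques, one per vertex of A, because an edge
   has just one end in A; ordering every clique along one fixed well-order of all edges gives a
   transitive orientation.  The same holds for B, so two comparability subgraphs suffice. *)

definition edges_meeting_in :: "'v set set \<Rightarrow> 'v set \<Rightarrow> 'v set set set" where
  "edges_meeting_in E S = {{e, f} | e f. e \<in> E \<and> f \<in> E \<and> e \<noteq> f \<and> (\<exists>x\<in>S. x \<in> e \<and> x \<in> f)}"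

lemma edges_meeting_inI:
  "e \<in> E \<Longrightarrow> f \<in> E \<Longrightarrow> e \<noteq> f \<Longrightarrow> x \<in> S \<Longrightarrow> x \<in> e \<Longrightarrow> x \<in> f \<Longrightarrow> {e, f} \<in> edges_meeting_in E S"
  unfolding edges_meeting_in_def by blast

lemma edges_meeting_inE:
  assumes "X \<in> edges_meeting_in E S"
  obtains e f x where "X = {e, f}" "e \<in> E" "f \<in> E" "e \<noteq> f" "x \<in> S" "x \<in> e" "x \<in> f"
  using assms unfolding edges_meeting_in_def by blast

lemma doubleton_mem_edges_meeting_in_iff:
  "{e, f} \<in> edges_meeting_in E S \<longleftrightarrow> e \<in> E \<and> f \<in> E \<and> e \<noteq> f \<and> (\<exists>x\<in>S. x \<in> e \<and> x \<in> f)"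
  unfolding edges_meeting_in_def by (auto simp: doubleton_eq_iff)

lemma simple_graph_edges_meeting_in: "simple_graph E (edges_meeting_in E S)"
  unfolding simple_graph_def edges_meeting_in_def by blast

lemma edges_meeting_in_subset_line_graph_edges: "edges_meeting_in E S \<subseteq> line_graph_edges E"
  unfolding edges_meeting_in_def line_graph_edges_def by blast

lemma subgraph_edges_meeting_in_line_graph:
  "subgraph E (edges_meeting_in E S) E (line_graph_edges E)"
  unfolding subgraph_def
  using simple_graph_edges_meeting_in edges_meeting_in_subset_line_graph_edges by blast

lemma comparability_graph_edges_meeting_in:
  assumes meets_once: "\<And>e x y. e \<in> E \<Longrightarrow> x \<in> e \<inter> S \<Longrightarrow> y \<in> e \<inter> S \<Longrightarrow> x = y"
  shows "comparability_graph E (edges_meeting_in E S)"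
proof -
  obtain r :: "'a set rel" where r: "Well_order r" "Field r = UNIV"
    using well_ordering by metis
  have total: "(e, f) \<in> r \<or> (f, e) \<in> r" if "e \<noteq> f" for e f
    using r that unfolding well_order_on_def linear_order_on_def total_on_def by blast
  have "antisym r" "trans r"
    using r unfolding well_order_on_def linear_order_on_def partial_order_on_def preorder_on_def
    by blast+
  define R where "R = {(e, f). {e, f} \<in> edges_meeting_in E S \<and> e \<noteq> f \<and> (e, f) \<in> r}"
  have "trans R"
  proof (rule transI)
    fix e f g assume ef: "(e, f) \<in> R" and fg: "(f, g) \<in> R"
    then obtain x y where "x \<in> S" "x \<in> e" "x \<in> f" "y \<in> S" "y \<in> f" "y \<in> g" "f \<in> E"
      unfolding R_def doubleton_mem_edges_meeting_in_iff by blast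
    with meets_once have "x \<in> g"
      by blast
    moreover have "e \<noteq> g"
      using ef fg \<open>antisym r\<close> unfolding R_def antisym_def by blast
    moreover have "(e, g) \<in> r"
      using ef fg \<open>trans r\<close> unfolding R_def trans_def by blast
    ultimately show "(e, g) \<in> R"
      using ef fg \<open>x \<in> S\<close> \<open>x \<in> e\<close> unfolding R_def doubleton_mem_edges_meeting_in_iff by blast
  qed
  moreover have "(e, f) \<in> R \<longleftrightarrow> (f, e) \<notin> R" if "e \<noteq> f" "{e, f} \<in> edges_meeting_in E S" for e f
    using that total[OF \<open>e \<noteq> f\<close>] \<open>antisym r\<close> unfolding R_def antisym_def
    by (auto simp: insert_commute)
  ultimately have "transitive_orientation (edges_meeting_in E S) R"
    unfolding transitive_orientation_def R_def by blast
  then show ?thesis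
    using simple_graph_edges_meeting_in unfolding comparability_graph_def by blast
qed

context
  fixes A B :: "'v set" and E :: "'v set set"
  assumes disjoint_parts: "A \<inter> B = {}"
    and edges_across: "\<forall>e\<in>E. \<exists>a b. a \<in> A \<and> b \<in> B \<and> e = {a, b}"
begin

lemma edge_eq_doubleton_parts: "e \<in> E \<Longrightarrow> a \<in> e \<inter> A \<Longrightarrow> b \<in> e \<inter> B \<Longrightarrow> e = {a, b}"
  using edges_across disjoint_parts by fastforce

lemma edge_meets_first_part_once: "e \<in> E \<Longrightarrow> x \<in> e \<inter> A \<Longrightarrow> y \<in> e \<inter> A \<Longrightarrow> x = y"
  using edges_across disjoint_parts by fastforce

lemma edge_meets_second_part_once: "e \<in> E \<Longrightarrow> x \<in> e \<inter> B \<Longrightarrow> y \<in> e \<inter> B \<Longrightarrow> x = y"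
  using edges_across disjoint_parts by fastforce

lemma edges_meeting_in_parts_disjoint: "edges_meeting_in E A \<inter> edges_meeting_in E B = {}"
proof (rule equals0I)
  fix X assume "X \<in> edges_meeting_in E A \<inter> edges_meeting_in E B"
  then have "X \<in> edges_meeting_in E A" "X \<in> edges_meeting_in E B"
    by simp_all
  from this(1) obtain e f a where ef: "X = {e, f}" "e \<in> E" "f \<in> E" "e \<noteq> f"
    and a: "a \<in> A" "a \<in> e" "a \<in> f"
    by (rule edges_meeting_inE)
  from \<open>X \<in> edges_meeting_in E B\<close> obtain b where "b \<in> B" "b \<in> e" "b \<in> f"
    unfolding \<open>X = {e, f}\<close> doubleton_mem_edges_meeting_in_iff by blast
  then have "e = {a, b}" "f = {a, b}"
    using edge_eq_doubleton_parts[of e a b] edge_eq_doubleton_parts[of f a b] ef(2,3) a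
    by simp_all
  with \<open>e \<noteq> f\<close> show False
    by simp
qed

lemma line_graph_edges_split_by_parts:
  "line_graph_edges E = edges_meeting_in E A \<union> edges_meeting_in E B"
proof
  show "line_graph_edges E \<subseteq> edges_meeting_in E A \<union> edges_meeting_in E B"
  proof
    fix X assume "X \<in> line_graph_edges E"
    then obtain e f x where X: "X = {e, f}" "e \<in> E" "f \<in> E" "e \<noteq> f" and x: "x \<in> e" "x \<in> f"
      unfolding line_graph_edges_def by blast
    obtain a b where "a \<in> A" "b \<in> B" "e = {a, b}"
      using bspec[OF edges_across \<open>e \<in> E\<close>] by blast
    with x(1) have "x \<in> A \<or> x \<in> B"
      by auto
    then show "X \<in> edges_meeting_in E A \<union> edges_meeting_in E B"
      using edges_meeting_inI[OF X(2-4) _ x] unfolding X(1) by blast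
  qed
  show "edges_meeting_in E A \<union> edges_meeting_in E B \<subseteq> line_graph_edges E"
    using edges_meeting_in_subset_line_graph_edges by blast
qed

end

lemma comparability_cover_2I:
  assumes "subgraph V\<^sub>1 E\<^sub>1 V E" "comparability_graph V\<^sub>1 E\<^sub>1"
    and "subgraph V\<^sub>2 E\<^sub>2 V E" "comparability_graph V\<^sub>2 E\<^sub>2"
    and "E\<^sub>1 \<inter> E\<^sub>2 = {}" "E\<^sub>1 \<union> E\<^sub>2 = E"
  shows "comparability_cover V E 2"
  unfolding comparability_cover_def
proof (intro exI conjI)
  let ?Vs = "\<lambda>i::nat. if i = 0 then V\<^sub>1 else V\<^sub>2" and ?Es = "\<lambda>i::nat. if i = 0 then E\<^sub>1 else E\<^sub>2"
  have two: "{..<2::nat} = {0, 1}"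
    by auto
  show "\<forall>i<2. subgraph (?Vs i) (?Es i) V E \<and> comparability_graph (?Vs i) (?Es i)"
    using assms by simp
  show "\<forall>i<2. \<forall>j<2. i \<noteq> j \<longrightarrow> ?Es i \<inter> ?Es j = {}"
    using assms(5) by (auto simp: less_2_cases_iff)
  show "(\<Union>i<2. ?Es i) = E"
    using assms(6) by (auto simp: two)
qed

theorem theorem4:
  fixes V :: "'v set" and E :: "'v set set"
  assumes "finite_simple_graph V E"
    and "bipartite V E"
  shows "p_number E (line_graph_edges E) \<le> 2"
proof -
  obtain A B where parts: "A \<inter> B = {}" "\<forall>e\<in>E. \<exists>a b. a \<in> A \<and> b \<in> B \<and> e = {a, b}"
    using assms(2) unfolding bipartite_def by blast
  have "comparability_graph E (edges_meeting_in E A)"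
    using edge_meets_first_part_once[OF parts] by (rule comparability_graph_edges_meeting_in)
  moreover have "comparability_graph E (edges_meeting_in E B)"
    using edge_meets_second_part_once[OF parts] by (rule comparability_graph_edges_meeting_in)
  ultimately have "comparability_cover E (line_graph_edges E) 2"
    using subgraph_edges_meeting_in_line_graph edges_meeting_in_parts_disjoint[OF parts]
      line_graph_edges_split_by_parts[OF parts, symmetric]
    by (intro comparability_cover_2I)
  then show ?thesis
    unfolding p_number_def by (rule Least_le)
qed

end
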